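(* Let $t\le n-2$. In every run of $P^{\min}$ in the context $\gamma_{\min,n,t}$, a total of exactly $n^2$ non-$\bot$ messages are sent, each an element of $\{0,1\}$, so $n^2$ bits are sent in total. In every run of $P^{\mathit{basic}}$ in the context $\gamma_{\mathit{basic},n,t}$, at most $O(n^2t)$ bits are sent in total (each non-$\bot$ message being one of the three values $0,1,(\mathit{init},1)$, encoded with a constant number of bits). Here $P^{\min}_i$ is: if $\mathit{decided}_i\ne\bot$ then $\mathtt{noop}$; else if $\mathit{init}_i=0$ or $\mathit{rd}_i=0$ then $\mathtt{decide}_i(0)$; else if $\mathit{time}_i=t+1$ then $\mathtt{decide}_i(1)$; else $\mathtt{noop}$. And $P^{\mathit{basic}}_i$ is: if $\mathit{decided}_i\ne\bot$ then $\mathtt{noop}$; else if $\mathit{init}_i=0$ or $\mathit{rd}_i=0$ then $\mathtt{decide}_i(0)$; else if $\#1_i>n-\mathit{time}_i$ or $\mathit{rd}_i=1$ then $\mathtt{decide}_i(1)$; else $\mathtt{noop}$.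
   Context: Agents and runs. There are $n$ agents $\mathit{Agt}=\{1,\ldots,n\}$; time is $m\in\mathbb N$, and round $m+1$ is the step from time $m$ to time $m+1$. An information-exchange protocol specifies for each agent $i$ local states, initial states, actions $\{\mathtt{decide}_i(0),\mathtt{decide}_i(1),\mathtt{noop}\}$, a message function $\mu_{ij}(s,a)$ giving the message ($\bot$ = none) that $i$ sends to each agent $j$ (including $j=i$) when performing $a$ in state $s$, and a transition function. A failure pattern is a pair $(\mathcal N,F)$ with $\mathcal N\subseteq\mathit{Agt}$ and $F:\mathbb N\times\mathit{Agt}\times\mathit{Agt}\to\{0,1\}$, $F(m,i,j)=0$ meaning the round-$(m+1)$ message from $i$ to $j$ is lost. $SO(t)$ is the set of failure patterns with $|\mathit{Agt}\setminus\mathcal N|\le t$ and $F(m,i,j)=0\Rightarrow i\notin\mathcal N$. An action protocol $P$ maps local states to actions; together with an initial global state it determines a run: at each time $k$ each agent $i$ performs $a_i=P_i(r_i(k))$, sends $\mu_{ij}(r_i(k),a_i)$ to each $j$ (received iff $F(k,i,j)=1$), and updates its state. Minimal and basic contexts. $\gamma_{\min,n,t}$: failure model $SO(t)$; local states $\langle\mathit{time}_i,\mathit{init}_i,\mathit{decided}_i,\mathit{rd}_i\rangle$, initial states $\langle0,\mathit{init}_i,\bot,\bot\rangle$ with $\mathit{init}_i\in\{0,1\}$; $\mu_{ij}(s,\mathtt{decide}_i(v))=v$ and $\mu_{ij}(s,\mathtt{noop})=\bot$ for all $j$; the transition increments $\mathit{time}_i$, sets $\mathit{decided}_i:=v$ on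 action $\mathtt{decide}_i(v)$ (else unchanged), and sets $\mathit{rd}_i$ to $0$ (resp. $1$) if in that round $i$ received the message $0$ (resp. $1$), else $\bot$. $\gamma_{\mathit{basic},n,t}$: failure model $SO(t)$; local states $\langle\mathit{time}_i,\mathit{init}_i,\mathit{decided}_i,\mathit{rd}_i,\#1_i\rangle$, $\#1_i\in\{0,\ldots,n\}$, initial states $\langle0,\mathit{init}_i,\bot,\bot,0\rangle$; $\mu_{ij}(s,\mathtt{decide}_i(v))=v$, $\mu_{ij}(s,\mathtt{noop})=(\mathit{init},1)$ if $s$ has the form $\langle m,1,\bot,\bot,k\rangle$, and $\bot$ otherwise; the transition updates the first four components as in the minimal context and sets $\#1_i$ to the number of $(\mathit{init},1)$ messages received in the current round if $\mathit{decided}_i=\bot$ and $i$ receives no message $0$ or $1$ in that round, and to $0$ otherwise. *)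

theory Defs
  imports Main
begin

text \<open>Agents are 1..n. Messages: a value 0/1, or the pair (init,1). None stands for bottom.\<close>

datatype msg = MVal nat | MInit1

datatype act = Decide nat | Noop

text \<open>Failure model SO(t): N is the set of nonfaulty agents, F m i j = False means the
round-(m+1) message from i to j is lost.\<close>

definition SO :: "nat \<Rightarrow> nat \<Rightarrow> nat set \<Rightarrow> (nat \<Rightarrow> nat \<Rightarrow> nat \<Rightarrow> bool) \<Rightarrow> bool" where
  "SO n t N F \<longleftrightarrow> N \<subseteq> {1..n} \<and> card ({1..n} - N) \<le> t \<and>
     (\<forall>m i j. \<not> F m i j \<longrightarrow> i \<notin> N)"

text \<open>Generic run: protocol P, message function mu (state, action, recipient),
transition delta (state, action, received message from each sender), initial states s0,
loss pattern F. run ... m i is the local state of agent i at time m.\<close>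

primrec run :: "nat \<Rightarrow> ('s \<Rightarrow> act) \<Rightarrow> ('s \<Rightarrow> act \<Rightarrow> nat \<Rightarrow> msg option)
   \<Rightarrow> ('s \<Rightarrow> act \<Rightarrow> (nat \<Rightarrow> msg option) \<Rightarrow> 's) \<Rightarrow> (nat \<Rightarrow> 's)
   \<Rightarrow> (nat \<Rightarrow> nat \<Rightarrow> nat \<Rightarrow> bool) \<Rightarrow> nat \<Rightarrow> nat \<Rightarrow> 's" where
  "run n P mu delta s0 F 0 = s0"
| "run n P mu delta s0 F (Suc m) =
    (let r = run n P mu delta s0 F m in
      (\<lambda>i. delta (r i) (P (r i))
             (\<lambda>j. if j \<in> {1..n} \<and> F m j i then mu (r j) (P (r j)) i else None)))"

text \<open>The set of (non-bottom) messages sent in a run: triples (m,i,j) such that in round m+1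
agent i sends a non-bottom message to agent j (whether or not it is delivered).\<close>

definition sent :: "nat \<Rightarrow> ('s \<Rightarrow> act) \<Rightarrow> ('s \<Rightarrow> act \<Rightarrow> nat \<Rightarrow> msg option)
   \<Rightarrow> ('s \<Rightarrow> act \<Rightarrow> (nat \<Rightarrow> msg option) \<Rightarrow> 's) \<Rightarrow> (nat \<Rightarrow> 's)
   \<Rightarrow> (nat \<Rightarrow> nat \<Rightarrow> nat \<Rightarrow> bool) \<Rightarrow> (nat \<times> nat \<times> nat) set" where
  "sent n P mu delta s0 F =
     {(m,i,j). i \<in> {1..n} \<and> j \<in> {1..n} \<and>
        mu (run n P mu delta s0 F m i) (P (run n P mu delta s0 F m i)) j \<noteq> None}"

definition rd_upd :: "(nat \<Rightarrow> msg option) \<Rightarrow> nat option" where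
  "rd_upd rcv = (if \<exists>j. rcv j = Some (MVal 0) then Some 0
                 else if \<exists>j. rcv j = Some (MVal 1) then Some 1 else None)"

definition dec_upd :: "nat option \<Rightarrow> act \<Rightarrow> nat option" where
  "dec_upd d a = (case a of Decide v \<Rightarrow> Some v | Noop \<Rightarrow> d)"

record mstate =
  mtime :: nat
  minit :: nat
  mdecided :: "nat option"
  mrd :: "nat option"

definition mu_min :: "mstate \<Rightarrow> act \<Rightarrow> nat \<Rightarrow> msg option" where
  "mu_min s a j = (case a of Decide v \<Rightarrow> Some (MVal v) | Noop \<Rightarrow> None)"

definition delta_min :: "mstate \<Rightarrow> act \<Rightarrow> (nat \<Rightarrow> msg option) \<Rightarrow> mstate" where
  "delta_min s a rcv = \<lparr>mtime = Suc (mtime s), minit = minit s,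
       mdecided = dec_upd (mdecided s) a, mrd = rd_upd rcv\<rparr>"

definition init_min :: "(nat \<Rightarrow> nat) \<Rightarrow> nat \<Rightarrow> mstate" where
  "init_min v i = \<lparr>mtime = 0, minit = v i, mdecided = None, mrd = None\<rparr>"

definition P_min :: "nat \<Rightarrow> mstate \<Rightarrow> act" where
  "P_min t s = (if mdecided s \<noteq> None then Noop
     else if minit s = 0 \<or> mrd s = Some 0 then Decide 0
     else if mtime s = t + 1 then Decide 1
     else Noop)"

record bstate =
  btime :: nat
  binit :: nat
  bdecided :: "nat option"
  brd :: "nat option"
  bcnt1 :: nat

definition mu_basic :: "bstate \<Rightarrow> act \<Rightarrow> nat \<Rightarrow> msg option" where
  "mu_basic s a j = (case a of Decide v \<Rightarrow> Some (MVal v)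
     | Noop \<Rightarrow> (if binit s = 1 \<and> bdecided s = None \<and> brd s = None then Some MInit1 else None))"

definition delta_basic :: "nat \<Rightarrow> bstate \<Rightarrow> act \<Rightarrow> (nat \<Rightarrow> msg option) \<Rightarrow> bstate" where
  "delta_basic n s a rcv =
     (let d' = dec_upd (bdecided s) a in
      \<lparr>btime = Suc (btime s), binit = binit s, bdecided = d', brd = rd_upd rcv,
       bcnt1 = (if d' = None \<and> \<not> (\<exists>j. rcv j = Some (MVal 0) \<or> rcv j = Some (MVal 1))
                then card {j \<in> {1..n}. rcv j = Some MInit1} else 0)\<rparr>)"

definition init_basic :: "(nat \<Rightarrow> nat) \<Rightarrow> nat \<Rightarrow> bstate" where
  "init_basic v i = \<lparr>btime = 0, binit = v i, bdecided = None, brd = None, bcnt1 = 0\<rparr>"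

definition P_basic :: "nat \<Rightarrow> bstate \<Rightarrow> act" where
  "P_basic n s = (if bdecided s \<noteq> None then Noop
     else if binit s = 0 \<or> brd s = Some 0 then Decide 0
     else if int (bcnt1 s) > int n - int (btime s) \<or> brd s = Some 1 then Decide 1
     else Noop)"

end

theory Submission
  imports Defs
begin

text \<open>In both protocols an agent acts, i.e. decides, at most once, since it stays silent once its
decision is recorded. Under \<open>P\<^sup>m\<^sup>i\<^sup>n\<close> every agent decides, at the latest at time
\<open>t + 1\<close>, and only a deciding agent sends, namely one bit to each of the \<open>n\<close> agents: exactly
\<open>n\<^sup>2\<close> messages. Under \<open>P\<^sup>b\<^sup>a\<^sup>s\<^sup>i\<^sup>c\<close> some nonfaulty agent decides by time \<open>t + 1\<close>: otherwise,
in round \<open>t + 1\<close> every nonfaulty agent heard \<open>(init,1)\<close> from all \<open>n - t\<close> or more nonfaulty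
agents, so \<open>#1 > n - (t + 1)\<close> and it decides. Its decision reaches everybody in the next
round, so all agents have decided by time \<open>t + 3\<close> and are silent from then on, leaving at
most \<open>(t + 3) n\<^sup>2\<close> messages.\<close>

declare run.simps(2) [simp del]

definition received :: "nat \<Rightarrow> ('s \<Rightarrow> act) \<Rightarrow> ('s \<Rightarrow> act \<Rightarrow> nat \<Rightarrow> msg option)
   \<Rightarrow> ('s \<Rightarrow> act \<Rightarrow> (nat \<Rightarrow> msg option) \<Rightarrow> 's) \<Rightarrow> (nat \<Rightarrow> 's)
   \<Rightarrow> (nat \<Rightarrow> nat \<Rightarrow> nat \<Rightarrow> bool) \<Rightarrow> nat \<Rightarrow> nat \<Rightarrow> nat \<Rightarrow> msg option" where
  "received n P mu delta s0 F m i =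
     (\<lambda>j. if j \<in> {1..n} \<and> F m j i
          then mu (run n P mu delta s0 F m j) (P (run n P mu delta s0 F m j)) i else None)"

lemma run_Suc:
  "run n P mu delta s0 F (Suc m) i =
     delta (run n P mu delta s0 F m i) (P (run n P mu delta s0 F m i))
       (received n P mu delta s0 F m i)"
  by (simp add: run.simps(2) received_def Let_def)

locale decision_trace =
  fixes decided :: "nat \<Rightarrow> nat option" and action :: "nat \<Rightarrow> act"
  assumes decided_0: "decided 0 = None"
    and decided_Suc: "decided (Suc m) = dec_upd (decided m) (action m)"
    and decided_Noop: "decided m \<noteq> None \<Longrightarrow> action m = Noop"
begin

lemma decided_iff_acted: "decided m \<noteq> None \<longleftrightarrow> (\<exists>k<m. action k \<noteq> Noop)"
proof (induction m)
  case 0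
  show ?case by (simp add: decided_0)
next
  case (Suc m)
  have "decided (Suc m) \<noteq> None \<longleftrightarrow> decided m \<noteq> None \<or> action m \<noteq> Noop"
    by (cases "action m") (simp_all add: decided_Suc dec_upd_def)
  with Suc.IH show ?case by (auto simp: less_Suc_eq)
qed

lemma decided_mono: "decided m \<noteq> None \<Longrightarrow> m \<le> m' \<Longrightarrow> decided m' \<noteq> None"
  by (meson decided_iff_acted order_less_le_trans)

lemma decided_after_action: "action m \<noteq> Noop \<Longrightarrow> decided (Suc m) \<noteq> None"
  using decided_iff_acted by blast

lemma acts_at_most_once: "action k \<noteq> Noop \<Longrightarrow> action k' \<noteq> Noop \<Longrightarrow> k = k'"
  by (metis decided_Noop decided_iff_acted linorder_neqE_nat)

end

context
  fixes n t :: nat and v :: "nat \<Rightarrow> nat" and F :: "nat \<Rightarrow> nat \<Rightarrow> nat \<Rightarrow> bool"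
begin

abbreviation "rmin \<equiv> run n (P_min t) mu_min delta_min (init_min v) F"

lemma mtime_rmin: "mtime (rmin m i) = m"
  by (induction m arbitrary: i) (simp_all add: run_Suc delta_min_def init_min_def)

lemma decision_trace_min: "decision_trace (\<lambda>m. mdecided (rmin m i)) (\<lambda>m. P_min t (rmin m i))"
  by unfold_locales (simp_all add: run_Suc delta_min_def init_min_def P_min_def)

lemma P_min_acts_exactly_once: "\<exists>!m. P_min t (rmin m i) \<noteq> Noop"
proof -
  interpret decision_trace "\<lambda>m. mdecided (rmin m i)" "\<lambda>m. P_min t (rmin m i)"
    by (rule decision_trace_min)
  have "\<exists>m. P_min t (rmin m i) \<noteq> Noop"
  proof (cases "mdecided (rmin (Suc t) i) = None")
    case True
    then have "P_min t (rmin (Suc t) i) \<noteq> Noop"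
      by (simp add: P_min_def mtime_rmin)
    then show ?thesis ..
  next
    case False
    then show ?thesis using decided_iff_acted by blast
  qed
  then show ?thesis using acts_at_most_once by blast
qed

definition decision_time_min :: "nat \<Rightarrow> nat" where
  "decision_time_min i = (THE m. P_min t (rmin m i) \<noteq> Noop)"

lemma P_min_acts_iff: "P_min t (rmin m i) \<noteq> Noop \<longleftrightarrow> m = decision_time_min i"
  using theI'[OF P_min_acts_exactly_once] the1_equality[OF P_min_acts_exactly_once]
  unfolding decision_time_min_def by blast

lemma sent_min_eq:
  "sent n (P_min t) mu_min delta_min (init_min v) F =
     (\<lambda>(i, j). (decision_time_min i, i, j)) ` ({1..n} \<times> {1..n})"
proof -
  have "mu_min s a j \<noteq> None \<longleftrightarrow> a \<noteq> Noop" for s a j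
    by (simp add: mu_min_def split: act.splits)
  then show ?thesis by (auto simp: sent_def P_min_acts_iff)
qed

lemma card_sent_min: "card (sent n (P_min t) mu_min delta_min (init_min v) F) = n\<^sup>2"
proof -
  have "inj_on (\<lambda>(i, j). (decision_time_min i, i, j)) ({1..n} \<times> {1..n})"
    by (auto simp: inj_on_def)
  then show ?thesis
    by (simp add: sent_min_eq card_image card_cartesian_product power2_eq_square)
qed

lemma sent_min_bit:
  "(m, i, j) \<in> sent n (P_min t) mu_min delta_min (init_min v) F \<Longrightarrow>
     mu_min (rmin m i) (P_min t (rmin m i)) j \<in> {Some (MVal 0), Some (MVal 1)}"
  by (auto simp: sent_def mu_min_def P_min_def split: act.splits if_splits)

end

lemma P_basic_NoopD:
  "bdecided s = None \<Longrightarrow> P_basic n s = Noop \<Longrightarrow>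
     binit s \<noteq> 0 \<and> brd s \<notin> {Some 0, Some 1} \<and> int (bcnt1 s) \<le> int n - int (btime s)"
  by (auto simp: P_basic_def split: if_splits)

context
  fixes n t :: nat and v :: "nat \<Rightarrow> nat" and F :: "nat \<Rightarrow> nat \<Rightarrow> nat \<Rightarrow> bool"
begin

abbreviation "rbasic \<equiv> run n (P_basic n) mu_basic (delta_basic n) (init_basic v) F"
abbreviation "rcv \<equiv> received n (P_basic n) mu_basic (delta_basic n) (init_basic v) F"

lemma btime_rbasic: "btime (rbasic m i) = m"
  by (induction m arbitrary: i) (simp_all add: run_Suc delta_basic_def init_basic_def Let_def)

lemma binit_rbasic: "binit (rbasic m i) = v i"
  by (induction m arbitrary: i) (simp_all add: run_Suc delta_basic_def init_basic_def Let_def)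

lemma brd_rbasic_Suc: "brd (rbasic (Suc m) i) = rd_upd (rcv m i)"
  by (simp add: run_Suc delta_basic_def Let_def)

lemma bcnt1_rbasic_Suc:
  "bdecided (rbasic (Suc m) i) = None \<Longrightarrow>
   \<not> (\<exists>j. rcv m i j = Some (MVal 0) \<or> rcv m i j = Some (MVal 1)) \<Longrightarrow>
     bcnt1 (rbasic (Suc m) i) = card {j \<in> {1..n}. rcv m i j = Some MInit1}"
  by (simp add: run_Suc delta_basic_def Let_def)

lemma brd_rbasic_cases: "brd (rbasic m i) \<in> {None, Some 0, Some 1}"
  by (cases m) (simp_all add: init_basic_def brd_rbasic_Suc rd_upd_def)

lemma decision_trace_basic:
  "decision_trace (\<lambda>m. bdecided (rbasic m i)) (\<lambda>m. P_basic n (rbasic m i))"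
  by unfold_locales (simp_all add: run_Suc delta_basic_def init_basic_def Let_def P_basic_def)

lemma nonfaulty_decides_by_t1:
  assumes SO: "SO n t N F" and "t < n" and init01: "\<forall>i\<in>{1..n}. v i \<in> {0,1}"
  shows "\<exists>m \<le> Suc t. \<exists>j\<in>N. P_basic n (rbasic m j) \<noteq> Noop"
proof (rule ccontr)
  assume "\<not> ?thesis"
  then have silent: "P_basic n (rbasic m j) = Noop" if "m \<le> Suc t" "j \<in> N" for m j
    using that by blast
  have undecided: "bdecided (rbasic m j) = None" if "m \<le> Suc t" "j \<in> N" for m j
  proof -
    have "\<forall>k<m. P_basic n (rbasic k j) = Noop"
      using silent that by simp
    then show ?thesis
      using decision_trace.decided_iff_acted[OF decision_trace_basic, of m j] by blast
  qed
  have N: "N \<subseteq> {1..n}" and faulty: "card ({1..n} - N) \<le> t"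
    and reliable: "\<And>m i j. i \<in> N \<Longrightarrow> F m i j"
    using SO unfolding SO_def by blast+
  have card_N: "n - t \<le> card N"
    using N faulty by (simp add: card_Diff_subset finite_subset)
  then have "N \<noteq> {}"
    using \<open>t < n\<close> by auto
  then obtain i where i: "i \<in> N"
    by blast
  have init1: "rcv t i j = Some MInit1" if j: "j \<in> N" for j
  proof -
    have "j \<in> {1..n}" and "P_basic n (rbasic t j) = Noop" and "bdecided (rbasic t j) = None"
      using j N silent undecided by auto
    moreover from this P_basic_NoopD
    have "binit (rbasic t j) \<noteq> 0" "brd (rbasic t j) \<notin> {Some 0, Some 1}"
      by blast+
    then have "binit (rbasic t j) = 1" "brd (rbasic t j) = None"
      using bspec[OF init01 \<open>j \<in> {1..n}\<close>] binit_rbasic[of t j] brd_rbasic_cases[of t j] by auto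
    ultimately show ?thesis
      using reliable[OF j] by (simp add: received_def mu_basic_def)
  qed
  have i_undecided: "bdecided (rbasic (Suc t) i) = None"
    using undecided i by simp
  from P_basic_NoopD[OF i_undecided silent[OF order_refl i]]
  have no_value: "rd_upd (rcv t i) \<notin> {Some 0, Some 1}"
    and count: "int (bcnt1 (rbasic (Suc t) i)) \<le> int n - int (Suc t)"
    by (auto simp: brd_rbasic_Suc btime_rbasic)
  have "card N \<le> card {j \<in> {1..n}. rcv t i j = Some MInit1}"
    using init1 N by (intro card_mono) auto
  also have "\<dots> = bcnt1 (rbasic (Suc t) i)"
    using no_value i_undecided by (intro bcnt1_rbasic_Suc[symmetric]) (auto simp: rd_upd_def split: if_splits)
  finally show False
    using count card_N \<open>t < n\<close> by linarith
qed

lemma all_decided_after_nonfaulty_decision: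
  assumes SO: "SO n t N F" and j: "j \<in> N" and acts: "P_basic n (rbasic m j) \<noteq> Noop"
  shows "bdecided (rbasic (Suc (Suc m)) k) \<noteq> None"
proof -
  interpret decision_trace "\<lambda>m. bdecided (rbasic m k)" "\<lambda>m. P_basic n (rbasic m k)"
    by (rule decision_trace_basic)
  obtain w where w: "P_basic n (rbasic m j) = Decide w"
    using acts by (cases "P_basic n (rbasic m j)") auto
  then have "w \<in> {0, 1}" by (auto simp: P_basic_def split: if_splits)
  moreover have "rcv m k j = Some (MVal w)"
    using w j SO by (auto simp: SO_def received_def mu_basic_def)
  ultimately have "brd (rbasic (Suc m) k) \<in> {Some 0, Some 1}"
    by (auto simp: brd_rbasic_Suc rd_upd_def)
  then have "bdecided (rbasic (Suc m) k) = None \<Longrightarrow> P_basic n (rbasic (Suc m) k) \<noteq> Noop"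
    using P_basic_NoopD by blast
  then show ?thesis using decided_after_action decided_mono by (metis le_SucI order_refl)
qed

lemma sent_basic_subset:
  assumes SO: "SO n t N F" and "t < n" and "\<forall>i\<in>{1..n}. v i \<in> {0,1}"
  shows "sent n (P_basic n) mu_basic (delta_basic n) (init_basic v) F
           \<subseteq> {..<t + 3} \<times> {1..n} \<times> {1..n}"
proof -
  obtain m j where "m \<le> Suc t" and j: "j \<in> N" and acts: "P_basic n (rbasic m j) \<noteq> Noop"
    using nonfaulty_decides_by_t1[OF assms] by blast
  have silent: "mu_basic (rbasic m' i) (P_basic n (rbasic m' i)) j' = None"
    if "t + 3 \<le> m'" for m' i j'
  proof -
    have "bdecided (rbasic (Suc (Suc m)) i) \<noteq> None"
      by (rule all_decided_after_nonfaulty_decision[OF SO j acts])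
    then have "bdecided (rbasic m' i) \<noteq> None"
      using decision_trace.decided_mono[OF decision_trace_basic, where m = "Suc (Suc m)" and m' = m']
        \<open>m \<le> Suc t\<close> that by simp
    then show ?thesis
      by (simp add: mu_basic_def P_basic_def)
  qed
  show ?thesis
    unfolding sent_def using silent by (auto intro: ccontr)
qed

lemma card_sent_basic_le:
  assumes "SO n t N F" and "t < n" and "\<forall>i\<in>{1..n}. v i \<in> {0,1}"
  shows "finite (sent n (P_basic n) mu_basic (delta_basic n) (init_basic v) F) \<and>
         card (sent n (P_basic n) mu_basic (delta_basic n) (init_basic v) F) \<le> (t + 3) * n\<^sup>2"
  using sent_basic_subset[OF assms] card_mono[OF _ sent_basic_subset[OF assms]]
    finite_subset[OF sent_basic_subset[OF assms]]
  by (simp add: card_cartesian_product power2_eq_square)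

end

theorem mainTheorem13:
  shows
   "(\<forall>n t N F v. t + 2 \<le> n \<longrightarrow> SO n t N F \<longrightarrow> (\<forall>i\<in>{1..n}. v i \<in> {0,1}) \<longrightarrow>
       card (sent n (P_min t) mu_min delta_min (init_min v) F) = n\<^sup>2 \<and>
       (\<forall>(m,i,j) \<in> sent n (P_min t) mu_min delta_min (init_min v) F.
          mu_min (run n (P_min t) mu_min delta_min (init_min v) F m i)
                 (P_min t (run n (P_min t) mu_min delta_min (init_min v) F m i)) j
            \<in> {Some (MVal 0), Some (MVal 1)}))
    \<and>
    (\<exists>C::nat. \<forall>n t N F v. t + 2 \<le> n \<longrightarrow> SO n t N F \<longrightarrow> (\<forall>i\<in>{1..n}. v i \<in> {0,1}) \<longrightarrow>
       finite (sent n (P_basic n) mu_basic (delta_basic n) (init_basic v) F) \<and>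
       card (sent n (P_basic n) mu_basic (delta_basic n) (init_basic v) F) \<le> C * n\<^sup>2 * (t + 1))"
proof (intro conjI exI[of _ 3] allI impI)
  fix n t :: nat and N F and v :: "nat \<Rightarrow> nat"
  show "card (sent n (P_min t) mu_min delta_min (init_min v) F) = n\<^sup>2"
    by (rule card_sent_min)
  show "\<forall>(m, i, j)\<in>sent n (P_min t) mu_min delta_min (init_min v) F.
          mu_min (run n (P_min t) mu_min delta_min (init_min v) F m i)
                 (P_min t (run n (P_min t) mu_min delta_min (init_min v) F m i)) j
            \<in> {Some (MVal 0), Some (MVal 1)}"
    using sent_min_bit by blast
next
  fix n t :: nat and N F and v :: "nat \<Rightarrow> nat"
  assume "t + 2 \<le> n" and hyps: "SO n t N F" "\<forall>i\<in>{1..n}. v i \<in> {0, 1}"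
  then have "t < n"
    by simp
  with hyps have "finite (sent n (P_basic n) mu_basic (delta_basic n) (init_basic v) F)"
    and "card (sent n (P_basic n) mu_basic (delta_basic n) (init_basic v) F) \<le> (t + 3) * n\<^sup>2"
    using card_sent_basic_le by blast+
  moreover have "(t + 3) * n\<^sup>2 \<le> 3 * n\<^sup>2 * (t + 1)"
    by (simp add: algebra_simps)
  ultimately show "finite (sent n (P_basic n) mu_basic (delta_basic n) (init_basic v) F)"
    and "card (sent n (P_basic n) mu_basic (delta_basic n) (init_basic v) F) \<le> 3 * n\<^sup>2 * (t + 1)"
    by linarith+
qed

end
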